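(* Let $\underline{c}=\{c_n,n\ge1\}$ be positive reals with $c_n\to c\ge1$. Let $\{\varphi_n,n\ge1\}$ be a sequence of real numbers which is $\underline{c}$-subadditive, i.e. $$\varphi_{n_1+\dots+n_k}\le c_{n_1+\dots+n_k}(\varphi_{n_1}+\dots+\varphi_{n_k})$$ for all positive integers $n_1,\dots,n_k$ and all $k\ge1$. Then $$\inf_{n\ge1}\frac{\varphi_n}{n}\le\liminf_{n\to\infty}\frac{\varphi_n}{n}\le\limsup_{n\to\infty}\frac{\varphi_n}{n}\le c^2\inf_{n\ge1}\frac{\varphi_n}{n}.$$ *)

theory Defs
  imports "HOL-Analysis.Analysis"
begin

end

theory Submission
  imports Defs
begin

(* Fix a block length m >= 1 and write n = (n div m) * m + (n mod m).  Splitting n into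
   n div m blocks of length m plus a remainder block, c-subadditivity gives
     phi n / n  <=  c n * ((n div m) * phi m + phi (n mod m)) / n,
   and the right-hand side tends to c * phi m / m, because (n div m) / n -> 1/m and the
   remainder term is bounded.  Hence  limsup phi n / n <= c * phi m / m  for every m.
   If phi m >= 0 this is at most c^2 * phi m / m since c >= 1.  If phi m < 0, then every
   phi (k m) is negative, and the one-block instance phi n <= c n * phi n forces
   c (k m) <= 1, so c = 1 and the two bounds agree.  Taking the infimum over m gives the
   upper bound; the two lower inequalities are general facts about liminf and limsup. *)

definition c_subadditive :: "(nat \<Rightarrow> real) \<Rightarrow> (nat \<Rightarrow> real) \<Rightarrow> bool" where
  "c_subadditive c \<phi> \<longleftrightarrow>
     (\<forall>ns. ns \<noteq> [] \<longrightarrow> (\<forall>n\<in>set ns. n \<ge> 1) \<longrightarrow>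
        \<phi> (sum_list ns) \<le> c (sum_list ns) * sum_list (map \<phi> ns))"

lemma c_subadditiveD:
  assumes "c_subadditive c \<phi>" "ns \<noteq> []" "\<forall>n\<in>set ns. n \<ge> 1"
  shows "\<phi> (sum_list ns) \<le> c (sum_list ns) * sum_list (map \<phi> ns)"
  using assms unfolding c_subadditive_def by blast

lemma bounded_over_n_tendsto_0:
  fixes b :: "nat \<Rightarrow> real"
  assumes bound: "\<And>n. \<bar>b n\<bar> \<le> M"
  shows "(\<lambda>n. b n / real n) \<longlonglongrightarrow> 0"
proof (rule Lim_null_comparison[where g = "\<lambda>n. M / real n"])
  show "\<forall>\<^sub>F n in sequentially. norm (b n / real n) \<le> M / real n"
    using bound by (intro always_eventually allI) (simp add: abs_divide divide_right_mono)
  show "(\<lambda>n. M / real n) \<longlonglongrightarrow> 0"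
    by (rule lim_const_over_n)
qed

lemma div_over_n_tendsto:
  assumes m: "m \<ge> 1"
  shows "(\<lambda>n. real (n div m) / real n) \<longlonglongrightarrow> 1 / real m"
proof -
  have split: "real (n div m) / real n = 1 / real m - (real (n mod m) / real m) / real n"
    if "n \<ge> 1" for n
  proof -
    have "real n = real (n div m) * real m + real (n mod m)"
      by (metis div_mult_mod_eq of_nat_add of_nat_mult)
    then have "real (n div m) = (real n - real (n mod m)) / real m"
      using m by (simp add: field_simps)
    then show ?thesis
      using m that by (simp add: field_simps)
  qed
  have "(\<lambda>n. (real (n mod m) / real m) / real n) \<longlonglongrightarrow> 0"
    by (rule bounded_over_n_tendsto_0[where M = 1]) (use m in simp)
  then have "(\<lambda>n. 1 / real m - (real (n mod m) / real m) / real n) \<longlonglongrightarrow> 1 / real m"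
    using tendsto_diff[OF tendsto_const] by fastforce
  moreover have "\<forall>\<^sub>F n in sequentially.
      1 / real m - (real (n mod m) / real m) / real n = real (n div m) / real n"
    unfolding eventually_sequentially using split by (intro exI[of _ 1]) auto
  ultimately show ?thesis by (rule Lim_transform_eventually)
qed

lemma c_subadditive_block_bound:
  assumes sub: "c_subadditive c \<phi>" and m: "m \<ge> 1" and n: "n \<ge> 1"
  shows "\<phi> n \<le> c n * (real (n div m) * \<phi> m + (if n mod m = 0 then 0 else \<phi> (n mod m)))"
proof -
  define ns where "ns = replicate (n div m) m @ (if n mod m = 0 then [] else [n mod m])"
  have sum: "sum_list ns = n"
    unfolding ns_def using div_mult_mod_eq[of n m]
    by (cases "n mod m = 0") (simp_all add: sum_list_replicate)
  with n have "ns \<noteq> []" by auto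
  moreover have "\<forall>k\<in>set ns. k \<ge> 1"
    unfolding ns_def using m by auto
  ultimately have "\<phi> (sum_list ns) \<le> c (sum_list ns) * sum_list (map \<phi> ns)"
    by (rule c_subadditiveD[OF sub])
  then show ?thesis
    unfolding sum by (cases "n mod m = 0") (simp_all add: ns_def sum_list_replicate)
qed

lemma c_subadditive_limsup_le:
  assumes sub: "c_subadditive c \<phi>" and c_lim: "c \<longlonglongrightarrow> c0" and m: "m \<ge> 1"
  shows "limsup (\<lambda>n. ereal (\<phi> n / real n)) \<le> ereal (c0 * (\<phi> m / real m))"
proof -
  define r where "r n = (if n mod m = 0 then 0 else \<phi> (n mod m))" for n
  define g where "g n = c n * (\<phi> m * (real (n div m) / real n) + r n / real n)" for n
  have bound: "\<phi> n / real n \<le> g n" if "n \<ge> 1" for n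
    using c_subadditive_block_bound[OF sub m that] that
    by (simp add: g_def r_def divide_right_mono field_simps)
  have "\<bar>r n\<bar> \<le> (\<Sum>k<m. \<bar>\<phi> k\<bar>)" for n
  proof -
    have "\<bar>\<phi> (n mod m)\<bar> \<le> (\<Sum>k<m. \<bar>\<phi> k\<bar>)"
      using m by (intro member_le_sum) auto
    moreover have "(\<Sum>k<m. \<bar>\<phi> k\<bar>) \<ge> 0" by (intro sum_nonneg) auto
    ultimately show ?thesis unfolding r_def by auto
  qed
  then have "(\<lambda>n. r n / real n) \<longlonglongrightarrow> 0"
    by (rule bounded_over_n_tendsto_0)
  then have "g \<longlonglongrightarrow> c0 * (\<phi> m * (1 / real m) + 0)"
    unfolding g_def by (intro tendsto_intros c_lim div_over_n_tendsto m)
  then have g_lim: "(\<lambda>n. ereal (g n)) \<longlonglongrightarrow> ereal (c0 * (\<phi> m / real m))"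
    by (simp add: tendsto_ereal)
  have "limsup (\<lambda>n. ereal (\<phi> n / real n)) \<le> limsup (\<lambda>n. ereal (g n))"
    by (rule Limsup_mono) (use bound in \<open>auto simp: eventually_sequentially\<close>)
  also have "\<dots> = ereal (c0 * (\<phi> m / real m))"
    by (rule lim_imp_Limsup[OF _ g_lim]) simp
  finally show ?thesis .
qed

lemma c_subadditive_negative_multiples:
  assumes sub: "c_subadditive c \<phi>" and c_pos: "\<And>n. n \<ge> 1 \<Longrightarrow> c n > 0"
    and m: "m \<ge> 1" and neg: "\<phi> m < 0" and k: "k \<ge> 1"
  shows "\<phi> (k * m) < 0"
proof -
  have "\<phi> (sum_list (replicate k m)) \<le> c (sum_list (replicate k m)) * sum_list (map \<phi> (replicate k m))"
    by (rule c_subadditiveD[OF sub]) (use k m in auto)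
  then have "\<phi> (k * m) \<le> c (k * m) * (real k * \<phi> m)"
    by (simp add: sum_list_replicate)
  also have "\<dots> < 0"
    using c_pos[of "k * m"] k m neg by (simp add: mult_pos_neg)
  finally show ?thesis .
qed

text \<open>The one-block instance phi n <= c n * phi n forces c n <= 1 wherever phi n < 0.\<close>

lemma c_subadditive_negative_imp_c_le_1:
  assumes sub: "c_subadditive c \<phi>" and n: "n \<ge> 1" and neg: "\<phi> n < 0"
  shows "c n \<le> 1"
proof -
  have "\<phi> (sum_list [n]) \<le> c (sum_list [n]) * sum_list (map \<phi> [n])"
    by (rule c_subadditiveD[OF sub]) (use n in auto)
  then have "1 * \<phi> n \<le> c n * \<phi> n" by simp
  with neg show ?thesis by (simp add: mult_le_cancel_right)
qed

lemma c_subadditive_negative_imp_limit_le_1: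
  assumes sub: "c_subadditive c \<phi>" and c_pos: "\<And>n. n \<ge> 1 \<Longrightarrow> c n > 0"
    and c_lim: "c \<longlonglongrightarrow> c0" and m: "m \<ge> 1" and neg: "\<phi> m < 0"
  shows "c0 \<le> 1"
proof -
  have "strict_mono (\<lambda>k. Suc k * m)"
    using m by (auto simp: strict_mono_Suc_iff)
  then have "(\<lambda>k. c (Suc k * m)) \<longlonglongrightarrow> c0"
    using LIMSEQ_subseq_LIMSEQ[OF c_lim] by (simp add: o_def)
  moreover have "c (Suc k * m) \<le> 1" for k
    using c_subadditive_negative_multiples[OF sub c_pos m neg, of "Suc k"] m
    by (intro c_subadditive_negative_imp_c_le_1[OF sub]) auto
  ultimately show ?thesis
    using LIMSEQ_le_const2 by blast
qed

lemma c_subadditive_limsup_le_sq: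
  assumes sub: "c_subadditive c \<phi>" and c_pos: "\<And>n. n \<ge> 1 \<Longrightarrow> c n > 0"
    and c_lim: "c \<longlonglongrightarrow> c0" and c0_ge: "c0 \<ge> 1" and m: "m \<ge> 1"
  shows "limsup (\<lambda>n. ereal (\<phi> n / real n)) \<le> ereal (c0\<^sup>2) * ereal (\<phi> m / real m)"
proof -
  have "c0 * (\<phi> m / real m) \<le> c0\<^sup>2 * (\<phi> m / real m)"
  proof (cases "\<phi> m \<ge> 0")
    case True
    with c0_ge m show ?thesis
      by (intro mult_right_mono) (auto simp: power2_eq_square)
  next
    case False
    with c_subadditive_negative_imp_limit_le_1[OF sub c_pos c_lim m] c0_ge
    have "c0 = 1" by simp
    then show ?thesis by simp
  qed
  with c_subadditive_limsup_le[OF sub c_lim m] show ?thesis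
    by (simp add: order_trans)
qed

lemma ereal_mult_INF:
  assumes "k > (0::real)"
  shows "ereal k * (INF x\<in>A. f x) = (INF x\<in>A. ereal k * f x)"
  using ereal_Inf_cmult[OF assms, of "\<lambda>y. y \<in> f ` A"]
  by (simp add: setcompr_eq_image image_image)

theorem mainTheorem7:
  fixes c :: "nat \<Rightarrow> real" and c0 :: real and \<phi> :: "nat \<Rightarrow> real"
  assumes c_pos: "\<And>n. n \<ge> 1 \<Longrightarrow> c n > 0"
    and c_lim: "c \<longlonglongrightarrow> c0"
    and c0_ge: "c0 \<ge> 1"
    and subadd: "\<And>ns. ns \<noteq> [] \<Longrightarrow> (\<forall>n\<in>set ns. n \<ge> 1) \<Longrightarrow>
                   \<phi> (sum_list ns) \<le> c (sum_list ns) * sum_list (map \<phi> ns)"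
  shows "(INF n\<in>{1..}. ereal (\<phi> n / real n)) \<le> liminf (\<lambda>n. ereal (\<phi> n / real n)) \<and>
         liminf (\<lambda>n. ereal (\<phi> n / real n)) \<le> limsup (\<lambda>n. ereal (\<phi> n / real n)) \<and>
         limsup (\<lambda>n. ereal (\<phi> n / real n)) \<le> ereal (c0\<^sup>2) * (INF n\<in>{1..}. ereal (\<phi> n / real n))"
proof (intro conjI)
  let ?f = "\<lambda>n. ereal (\<phi> n / real n)"
  have sub: "c_subadditive c \<phi>"
    unfolding c_subadditive_def using subadd by blast
  show "(INF n\<in>{1..}. ?f n) \<le> liminf ?f"
    unfolding liminf_SUP_INF by (rule SUP_upper2[of 1]) auto
  show "liminf ?f \<le> limsup ?f"
    by (rule Liminf_le_Limsup) simp
  have c0_sq_pos: "c0\<^sup>2 > 0" using c0_ge by simp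
  show "limsup ?f \<le> ereal (c0\<^sup>2) * (INF n\<in>{1..}. ?f n)"
    unfolding ereal_mult_INF[OF c0_sq_pos]
    by (rule INF_greatest) (use c_subadditive_limsup_le_sq[OF sub c_pos c_lim c0_ge] in auto)
qed

end
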